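(* Let $p \in \{1, \infty\}$ and let $f:\mathbb{R}^n \to \mathbb{R}^n$ be a Lipschitz, differentiable vector field. Then $f$ is weakly infinitesimally contracting (WIC) with respect to the $p$-norm if and only if there exist a real number $\gamma$ and a differentiable Lipschitz map $\phi:\mathbb{R}^n\to\mathbb{R}^n$ with $\|\phi\|_{\mathrm{Lip},p} \le \gamma$ such that \[ f(x) = -\gamma x + \phi(x) \quad \text{for all } x \in \mathbb{R}^n. \]
   Context: For $x\in\mathbb{R}^n$, $\|x\|_1=\sum_i |x_i|$ and $\|x\|_\infty=\max_i |x_i|$; for a matrix $A$, $\|A\|_p=\sup_{x\neq 0}\|Ax\|_p/\|x\|_p$ is the induced norm. The matrix measure (logarithmic norm) of $A\in\mathbb{R}^{n\times n}$ is $\mu_p(A)=\lim_{h\to 0^+}\frac{\|I+hA\|_p-1}{h}$; explicitly $\mu_1(A)=\max_j\big(a_{jj}+\sum_{i\neq j}|a_{ij}|\big)$ and $\mu_\infty(A)=\max_i\big(a_{ii}+\sum_{j\neq i}|a_{ij}|\big)$. $Df(x)$ denotes the Jacobian of $f$ at $x$. A vector field $f$ is WIC with respect to the $p$-norm if $\sup_{x\in\mathbb{R}^n}\mu_p(Df(x))\le 0$. For a differentiable $\phi:\mathbb{R}^n\to\mathbb{R}^n$, its Lipschitz constant with respect to the $p$-norm is $\|\phi\|_{\mathrm{Lip},p}=\sup_{x\in\mathbb{R}^n}\|D\phi(x)\|_p$. *)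

theory Defs
  imports "HOL-Analysis.Analysis"
begin

datatype pnorm = P1 | PInf

definition vnorm :: "pnorm \<Rightarrow> real^'n \<Rightarrow> real" where
  "vnorm p x = (case p of
      P1 \<Rightarrow> (\<Sum>i\<in>UNIV. \<bar>x $ i\<bar>)
    | PInf \<Rightarrow> Max ((\<lambda>i. \<bar>x $ i\<bar>) ` UNIV))"

definition mnorm :: "pnorm \<Rightarrow> real^'n^'n \<Rightarrow> real" where
  "mnorm p A = Sup {vnorm p (A *v x) / vnorm p x | x. x \<noteq> 0}"

text \<open>Matrix measure (logarithmic norm), explicit formulas for p = 1 and p = infinity.\<close>
definition mu :: "pnorm \<Rightarrow> real^'n^'n \<Rightarrow> real" where
  "mu p A = (case p of
      P1 \<Rightarrow> Max ((\<lambda>j. A $ j $ j + (\<Sum>i\<in>UNIV - {j}. \<bar>A $ i $ j\<bar>)) ` UNIV)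
    | PInf \<Rightarrow> Max ((\<lambda>i. A $ i $ i + (\<Sum>j\<in>UNIV - {i}. \<bar>A $ i $ j\<bar>)) ` UNIV))"

definition jac :: "(real^'n \<Rightarrow> real^'n) \<Rightarrow> real^'n \<Rightarrow> real^'n^'n" where
  "jac f x = matrix (frechet_derivative f (at x))"

definition WIC :: "pnorm \<Rightarrow> (real^'n \<Rightarrow> real^'n) \<Rightarrow> bool" where
  "WIC p f \<longleftrightarrow> (SUP x. mu p (jac f x)) \<le> 0"

definition lip_const :: "pnorm \<Rightarrow> (real^'n \<Rightarrow> real^'n) \<Rightarrow> real" where
  "lip_const p \<phi> = (SUP x. mnorm p (jac \<phi> x))"

end

theory Submission
  imports Defs
begin

text \<open>
  For p = 1 (p = \<infinity>) the induced norm of a matrix is its largest absolute column (row) sum,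
  and \<mu> is the same maximum with the diagonal entry counted with its sign. Hence
  \<mu>(A + \<gamma>I) = \<mu>(A) + \<gamma> \<le> \<parallel>A + \<gamma>I\<parallel>, with equality once the diagonal of A + \<gamma>I is nonnegative.
  Put \<phi>(x) = f(x) + \<gamma>x, so that D\<phi> = Df + \<gamma>I. If \<parallel>D\<phi>\<parallel> \<le> \<gamma> everywhere then
  \<mu>(Df) \<le> \<parallel>D\<phi>\<parallel> - \<gamma> \<le> 0. Conversely, if f is L-Lipschitz then every entry of Df is bounded by L
  in absolute value, so for \<gamma> = L the diagonal of D\<phi> is nonnegative and \<parallel>D\<phi>\<parallel> = \<mu>(Df) + L \<le> L
  whenever f is WIC.
\<close>

definition max_abs_sum :: "pnorm \<Rightarrow> real^'n^'n \<Rightarrow> real" where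
  "max_abs_sum p A = (case p of
      P1 \<Rightarrow> Max ((\<lambda>j. \<Sum>i\<in>UNIV. \<bar>A $ i $ j\<bar>) ` UNIV)
    | PInf \<Rightarrow> Max ((\<lambda>i. \<Sum>j\<in>UNIV. \<bar>A $ i $ j\<bar>) ` UNIV))"

lemma Max_range_mono:
  fixes f g :: "'i::finite \<Rightarrow> 'a::linorder"
  assumes "\<And>i. f i \<le> g i"
  shows "Max (range f) \<le> Max (range g)"
proof (rule Max.boundedI)
  fix y assume "y \<in> range f"
  then obtain i where "y = f i" by blast
  also have "f i \<le> g i" by (rule assms)
  also have "g i \<le> Max (range g)" by (rule Max_ge) auto
  finally show "y \<le> Max (range g)" .
qed auto

lemma sum_abs_row_split:
  "(\<Sum>j\<in>UNIV. \<bar>A $ i $ j\<bar>) = \<bar>A $ i $ i\<bar> + (\<Sum>j\<in>UNIV - {i}. \<bar>A $ i $ j\<bar>)"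
  by (rule sum.remove) auto

lemma sum_abs_column_split:
  "(\<Sum>i\<in>UNIV. \<bar>A $ i $ j\<bar>) = \<bar>A $ j $ j\<bar> + (\<Sum>i\<in>UNIV - {j}. \<bar>A $ i $ j\<bar>)"
  by (rule sum.remove) auto

lemma mu_le_max_abs_sum: "mu p A \<le> max_abs_sum p A"
  unfolding mu_def max_abs_sum_def
  by (cases p; simp only: pnorm.case sum_abs_row_split sum_abs_column_split; rule Max_range_mono; simp)

lemma max_abs_sum_eq_mu:
  assumes "\<And>k. 0 \<le> A $ k $ k"
  shows "max_abs_sum p A = mu p A"
  by (cases p) (simp_all add: mu_def max_abs_sum_def sum_abs_row_split sum_abs_column_split assms)

lemma mu_add_scaleR_mat_1: "mu p (A + c *\<^sub>R mat 1) = mu p A + c"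
proof -
  have "(\<Sum>k\<in>UNIV - {i}. \<bar>(A + c *\<^sub>R mat 1) $ i $ k\<bar>) = (\<Sum>k\<in>UNIV - {i}. \<bar>A $ i $ k\<bar>)"
    "(\<Sum>k\<in>UNIV - {i}. \<bar>(A + c *\<^sub>R mat 1) $ k $ i\<bar>) = (\<Sum>k\<in>UNIV - {i}. \<bar>A $ k $ i\<bar>)" for i
    by (auto simp: mat_def intro!: sum.cong)
  then show ?thesis
    by (cases p) (simp_all add: mu_def mat_def Max_add_commute[symmetric], simp_all add: ac_simps)
qed

lemma max_abs_sum_le:
  fixes A :: "real^'n^'n"
  assumes "\<And>i j. \<bar>A $ i $ j\<bar> \<le> c"
  shows "max_abs_sum p A \<le> real CARD('n) * c"
  using sum_bounded_above[of UNIV "\<lambda>i. \<bar>A $ i $ _\<bar>" c] sum_bounded_above[of UNIV "\<lambda>j. \<bar>A $ _ $ j\<bar>" c]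
  by (cases p) (auto simp: max_abs_sum_def assms intro!: Max.boundedI)

lemma vnorm_pos:
  fixes x :: "real^'n"
  assumes "x \<noteq> 0"
  shows "0 < vnorm p x"
proof -
  obtain k where k: "x $ k \<noteq> 0" using assms by (metis vec_eq_iff zero_index)
  then have "0 < \<bar>x $ k\<bar>" by simp
  moreover have "\<bar>x $ k\<bar> \<le> (\<Sum>i\<in>UNIV. \<bar>x $ i\<bar>)" by (rule member_le_sum) auto
  moreover have "\<bar>x $ k\<bar> \<le> Max ((\<lambda>i. \<bar>x $ i\<bar>) ` UNIV)" by (rule Max_ge) auto
  ultimately show ?thesis by (cases p; simp only: vnorm_def pnorm.case; linarith)
qed

lemma vnorm_matrix_vector_mult_le:
  fixes A :: "real^'n^'n"
  shows "vnorm p (A *v x) \<le> max_abs_sum p A * vnorm p x"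
proof -
  have entry_le: "\<bar>(A *v x) $ i\<bar> \<le> (\<Sum>j\<in>UNIV. \<bar>A $ i $ j\<bar> * \<bar>x $ j\<bar>)" for i
    unfolding matrix_vector_mult_def by (auto intro: order_trans[OF sum_abs] simp: abs_mult)
  show ?thesis
  proof (cases p)
    case P1
    have "(\<Sum>i\<in>UNIV. \<bar>(A *v x) $ i\<bar>) \<le> (\<Sum>i\<in>UNIV. \<Sum>j\<in>UNIV. \<bar>A $ i $ j\<bar> * \<bar>x $ j\<bar>)"
      by (rule sum_mono) (rule entry_le)
    also have "\<dots> = (\<Sum>j\<in>UNIV. (\<Sum>i\<in>UNIV. \<bar>A $ i $ j\<bar>) * \<bar>x $ j\<bar>)"
      by (subst sum.swap) (simp add: sum_distrib_right)
    also have "\<dots> \<le> (\<Sum>j\<in>UNIV. max_abs_sum P1 A * \<bar>x $ j\<bar>)"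
      by (intro sum_mono mult_right_mono) (auto simp: max_abs_sum_def)
    finally show ?thesis using P1 by (simp add: vnorm_def sum_distrib_left)
  next
    case PInf
    let ?m = "Max ((\<lambda>i. \<bar>x $ i\<bar>) ` UNIV)"
    have "0 \<le> ?m" by (rule order_trans[OF abs_ge_zero Max_ge]) auto
    have "\<bar>(A *v x) $ i\<bar> \<le> max_abs_sum PInf A * ?m" for i
    proof -
      note entry_le[of i]
      also have "(\<Sum>j\<in>UNIV. \<bar>A $ i $ j\<bar> * \<bar>x $ j\<bar>) \<le> (\<Sum>j\<in>UNIV. \<bar>A $ i $ j\<bar>) * ?m"
        by (auto simp: sum_distrib_right intro!: sum_mono mult_left_mono)
      also have "\<dots> \<le> max_abs_sum PInf A * ?m"
        using \<open>0 \<le> ?m\<close> by (auto simp: max_abs_sum_def intro: mult_right_mono)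
      finally show ?thesis .
    qed
    then show ?thesis using PInf by (simp add: vnorm_def)
  qed
qed

lemma vnorm_matrix_vector_mult_attains:
  fixes A :: "real^'n^'n"
  obtains x where "x \<noteq> 0" "vnorm p x = 1" "max_abs_sum p A \<le> vnorm p (A *v x)"
proof (cases p)
  case P1
  have "max_abs_sum P1 A \<in> range (\<lambda>j. \<Sum>i\<in>UNIV. \<bar>A $ i $ j\<bar>)"
    unfolding max_abs_sum_def by (auto intro: Max_in)
  then obtain j where j: "max_abs_sum P1 A = (\<Sum>i\<in>UNIV. \<bar>A $ i $ j\<bar>)" by blast
  have "vnorm P1 (axis j (1::real)) = 1"
    by (simp add: vnorm_def axis_def if_distrib[of abs] cong: if_cong)
  moreover have "vnorm P1 (A *v axis j 1) = max_abs_sum P1 A"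
    by (simp add: vnorm_def matrix_vector_mult_basis column_def j)
  ultimately show ?thesis
    using P1 that[of "axis j 1"] by simp
next
  case PInf
  have "max_abs_sum PInf A \<in> range (\<lambda>i. \<Sum>j\<in>UNIV. \<bar>A $ i $ j\<bar>)"
    unfolding max_abs_sum_def by (auto intro: Max_in)
  then obtain i where i: "max_abs_sum PInf A = (\<Sum>j\<in>UNIV. \<bar>A $ i $ j\<bar>)" by blast
  define x :: "real^'n" where "x = (\<chi> j. if A $ i $ j \<ge> 0 then 1 else -1)"
  have abs_x: "\<bar>x $ j\<bar> = 1" for j by (simp add: x_def)
  then have "(\<lambda>j. \<bar>x $ j\<bar>) ` UNIV = {1}" by auto
  then have "vnorm PInf x = 1" by (simp add: vnorm_def)
  moreover have "x \<noteq> 0" using abs_x by (metis abs_zero zero_index zero_neq_one)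
  moreover have "max_abs_sum PInf A \<le> vnorm PInf (A *v x)"
  proof -
    have "max_abs_sum PInf A = (A *v x) $ i"
      unfolding i matrix_vector_mult_def x_def by (auto intro!: sum.cong)
    also have "\<dots> \<le> Max ((\<lambda>i. \<bar>(A *v x) $ i\<bar>) ` UNIV)"
      by (rule order_trans[OF abs_ge_self Max_ge]) auto
    finally show ?thesis by (simp add: vnorm_def)
  qed
  ultimately show ?thesis using PInf that by blast
qed

lemma mnorm_eq_max_abs_sum: "mnorm p A = max_abs_sum p A"
  unfolding mnorm_def
proof (rule cSup_eq_maximum)
  have quotient_le: "vnorm p (A *v y) / vnorm p y \<le> max_abs_sum p A" if "y \<noteq> 0" for y
    using vnorm_matrix_vector_mult_le[of p A y] vnorm_pos[OF that, of p] by (simp add: divide_le_eq)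
  then show "\<And>q. q \<in> {vnorm p (A *v x) / vnorm p x |x. x \<noteq> 0} \<Longrightarrow> q \<le> max_abs_sum p A"
    by blast
  obtain x where "x \<noteq> 0" "vnorm p x = 1" "max_abs_sum p A \<le> vnorm p (A *v x)"
    by (rule vnorm_matrix_vector_mult_attains)
  with quotient_le[of x] have "max_abs_sum p A = vnorm p (A *v x) / vnorm p x"
    by simp
  with \<open>x \<noteq> 0\<close> show "max_abs_sum p A \<in> {vnorm p (A *v x) / vnorm p x |x. x \<noteq> 0}"
    by blast
qed

lemma norm_derivative_le_lipschitz:
  fixes f :: "'a::real_normed_vector \<Rightarrow> 'b::real_normed_vector"
  assumes lip: "L-lipschitz_on UNIV f" and deriv: "(f has_derivative D) (at x)"
  shows "norm (D v) \<le> L * norm v"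
proof (cases "v = 0")
  case True
  then show ?thesis using has_derivative_bounded_linear[OF deriv] by (simp add: linear_simps)
next
  case False
  interpret D: bounded_linear D by (rule has_derivative_bounded_linear[OF deriv])
  define q where "q = (\<lambda>h. norm (f (x + h) - f x - D h) / norm h)"
  have "(q \<longlongrightarrow> 0) (at 0)"
    using deriv by (simp add: has_derivative_at q_def)
  moreover have "filterlim (\<lambda>t::real. t *\<^sub>R v) (at 0) (at 0)"
    using False by (auto simp: filterlim_at intro!: tendsto_eq_intros eventually_at_filter[THEN iffD2])
  ultimately have "((\<lambda>t. q (t *\<^sub>R v)) \<longlongrightarrow> 0) (at 0)"
    by (rule filterlim_compose)
  then have "((\<lambda>t. L * norm v + q (t *\<^sub>R v) * norm v) \<longlongrightarrow> L * norm v) (at 0)"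
    by (auto intro!: tendsto_eq_intros)
  moreover have "norm (D v) \<le> L * norm v + q (t *\<^sub>R v) * norm v" if "t \<noteq> 0" for t
  proof -
    have "\<bar>t\<bar> * norm (D v) = norm (D (t *\<^sub>R v))" by (simp add: D.scaleR)
    also have "\<dots> \<le> norm (f (x + t *\<^sub>R v) - f x) + norm (f (x + t *\<^sub>R v) - f x - D (t *\<^sub>R v))"
      using norm_triangle_ineq4[of "f (x + t *\<^sub>R v) - f x" "f (x + t *\<^sub>R v) - f x - D (t *\<^sub>R v)"]
      by simp
    also have "\<dots> \<le> \<bar>t\<bar> * (L * norm v + q (t *\<^sub>R v) * norm v)"
      using lipschitz_onD[OF lip, of "x + t *\<^sub>R v" x] that False
      by (simp add: q_def dist_norm distrib_left mult.left_commute)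
    finally show ?thesis using that by simp
  qed
  then have "\<forall>\<^sub>F t in at 0. norm (D v) \<le> L * norm v + q (t *\<^sub>R v) * norm v"
    by (auto simp: eventually_at_filter)
  ultimately show ?thesis
    by (rule tendsto_le[OF trivial_limit_at _ tendsto_const])
qed

lemma jac_eq_matrix:
  assumes "(f has_derivative D) (at x)"
  shows "jac f x = matrix D"
  by (simp add: jac_def frechet_derivative_at[OF assms, symmetric])

lemma abs_jac_le_lipschitz:
  fixes f :: "real^'n \<Rightarrow> real^'n"
  assumes lip: "L-lipschitz_on UNIV f" and diff: "f differentiable (at x)"
  shows "\<bar>jac f x $ i $ j\<bar> \<le> L"
proof -
  let ?D = "frechet_derivative f (at x)"
  have deriv: "(f has_derivative ?D) (at x)"
    using diff by (rule frechet_derivative_works[THEN iffD1])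
  have "\<bar>jac f x $ i $ j\<bar> = \<bar>?D (axis j 1) $ i\<bar>"
    by (simp add: jac_eq_matrix[OF deriv] matrix_def)
  also have "\<dots> \<le> norm (?D (axis j 1))"
    by (rule component_le_norm_cart)
  also have "\<dots> \<le> L"
    using norm_derivative_le_lipschitz[OF lip deriv, of "axis j 1"] by simp
  finally show ?thesis .
qed

lemma jac_add_scaleR_id:
  fixes f :: "real^'n \<Rightarrow> real^'n"
  assumes "f differentiable (at x)"
  shows "jac (\<lambda>y. f y + c *\<^sub>R y) x = jac f x + c *\<^sub>R mat 1"
proof -
  let ?D = "frechet_derivative f (at x)"
  have deriv: "(f has_derivative ?D) (at x)"
    using assms by (rule frechet_derivative_works[THEN iffD1])
  then have "((\<lambda>y. f y + c *\<^sub>R y) has_derivative (\<lambda>h. ?D h + c *\<^sub>R h)) (at x)"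
    by (intro derivative_intros)
  then show ?thesis
    by (simp add: jac_eq_matrix[OF deriv] jac_eq_matrix vec_eq_iff matrix_def mat_def axis_def)
qed

lemma mnorm_jac_le_lipschitz:
  fixes f :: "real^'n \<Rightarrow> real^'n"
  assumes "L-lipschitz_on UNIV f" and "\<forall>x. f differentiable (at x)"
  shows "mnorm p (jac f x) \<le> real CARD('n) * L"
  unfolding mnorm_eq_max_abs_sum using assms by (intro max_abs_sum_le abs_jac_le_lipschitz) auto

text \<open>
  The Lipschitz bound makes the suprema in \<^const>\<open>WIC\<close> and \<^const>\<open>lip_const\<close> suprema of
  bounded sets; for an unbounded set of reals \<^const>\<open>Sup\<close> is unspecified.
\<close>

lemma WIC_iff_mu_jac_nonpos:
  fixes f :: "real^'n \<Rightarrow> real^'n"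
  assumes "L-lipschitz_on UNIV f" and "\<forall>x. f differentiable (at x)"
  shows "WIC p f \<longleftrightarrow> (\<forall>x. mu p (jac f x) \<le> 0)"
proof -
  have "mu p (jac f x) \<le> real CARD('n) * L" for x
    using mu_le_max_abs_sum mnorm_jac_le_lipschitz[OF assms] by (metis mnorm_eq_max_abs_sum order_trans)
  then have "bdd_above (range (\<lambda>x. mu p (jac f x)))" by (rule bdd_aboveI2)
  then show ?thesis by (simp add: WIC_def cSUP_le_iff)
qed

lemma lip_const_le_iff:
  fixes f :: "real^'n \<Rightarrow> real^'n"
  assumes "L-lipschitz_on UNIV f" and "\<forall>x. f differentiable (at x)"
  shows "lip_const p f \<le> c \<longleftrightarrow> (\<forall>x. mnorm p (jac f x) \<le> c)"
proof -
  have "bdd_above (range (\<lambda>x. mnorm p (jac f x)))"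
    using mnorm_jac_le_lipschitz[OF assms] by (rule bdd_aboveI2)
  then show ?thesis by (simp add: lip_const_def cSUP_le_iff)
qed

lemma mnorm_jac_add_scaleR_id:
  fixes f :: "real^'n \<Rightarrow> real^'n"
  assumes lip: "L-lipschitz_on UNIV f" and diff: "f differentiable (at x)" and "L \<le> c"
  shows "mnorm p (jac (\<lambda>y. f y + c *\<^sub>R y) x) = mu p (jac f x) + c"
proof -
  have "0 \<le> (jac f x + c *\<^sub>R mat 1) $ k $ k" for k
    using abs_jac_le_lipschitz[OF lip diff, of k k] \<open>L \<le> c\<close> by (simp add: mat_def)
  then show ?thesis
    by (simp add: jac_add_scaleR_id[OF diff] mnorm_eq_max_abs_sum max_abs_sum_eq_mu mu_add_scaleR_mat_1)
qed

lemma lip_const_shift_le_of_WIC: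
  fixes f :: "real^'n \<Rightarrow> real^'n"
  assumes lip: "L-lipschitz_on UNIV f" and diff: "\<forall>x. f differentiable (at x)" and "WIC p f"
  shows "lip_const p (\<lambda>y. f y + L *\<^sub>R y) \<le> L"
proof -
  have "(L + \<bar>L\<bar> * 1)-lipschitz_on UNIV (\<lambda>y. f y + L *\<^sub>R y)"
    by (intro lipschitz_on_add lip lipschitz_on_cmult lipschitz_on_id)
  moreover have "\<forall>x. (\<lambda>y. f y + L *\<^sub>R y) differentiable (at x)"
    using diff by simp
  moreover have "mu p (jac f x) \<le> 0" for x
    using \<open>WIC p f\<close> WIC_iff_mu_jac_nonpos[OF lip diff] by blast
  ultimately show ?thesis
    using mnorm_jac_add_scaleR_id[OF lip] diff by (simp add: lip_const_le_iff)
qed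

lemma WIC_of_lip_const_shift_le:
  fixes f :: "real^'n \<Rightarrow> real^'n"
  assumes lip: "L-lipschitz_on UNIV f" and diff: "\<forall>x. f differentiable (at x)"
    and shift_lip: "K-lipschitz_on UNIV (\<lambda>y. f y + \<gamma> *\<^sub>R y)"
    and lip_const_le: "lip_const p (\<lambda>y. f y + \<gamma> *\<^sub>R y) \<le> \<gamma>"
  shows "WIC p f"
proof -
  have shift_diff: "\<forall>x. (\<lambda>y. f y + \<gamma> *\<^sub>R y) differentiable (at x)"
    using diff by simp
  have "mu p (jac f x) + \<gamma> \<le> \<gamma>" for x
  proof -
    have "mu p (jac f x) + \<gamma> = mu p (jac (\<lambda>y. f y + \<gamma> *\<^sub>R y) x)"
      using diff by (simp add: jac_add_scaleR_id mu_add_scaleR_mat_1)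
    also have "\<dots> \<le> mnorm p (jac (\<lambda>y. f y + \<gamma> *\<^sub>R y) x)"
      by (simp add: mnorm_eq_max_abs_sum mu_le_max_abs_sum)
    also have "\<dots> \<le> \<gamma>"
      using lip_const_le lip_const_le_iff[OF shift_lip shift_diff] by blast
    finally show ?thesis .
  qed
  then show ?thesis using WIC_iff_mu_jac_nonpos[OF lip diff] by simp
qed

theorem mainTheorem1:
  fixes p :: pnorm and f :: "real^'n \<Rightarrow> real^'n"
  assumes lip: "\<exists>L. L-lipschitz_on UNIV f"
    and diff: "\<forall>x. f differentiable (at x)"
  shows "WIC p f \<longleftrightarrow>
    (\<exists>(\<gamma>::real) \<phi>. (\<forall>x. \<phi> differentiable (at x)) \<and> (\<exists>L. L-lipschitz_on UNIV \<phi>)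
        \<and> lip_const p \<phi> \<le> \<gamma> \<and> (\<forall>x. f x = - \<gamma> *\<^sub>R x + \<phi> x))"
    (is "_ \<longleftrightarrow> (\<exists>\<gamma> \<phi>. ?decomposition \<gamma> \<phi>)")
proof -
  obtain L where L: "L-lipschitz_on UNIV f" using lip by blast
  have "?decomposition L (\<lambda>y. f y + L *\<^sub>R y)" if "WIC p f"
  proof -
    have "(L + \<bar>L\<bar> * 1)-lipschitz_on UNIV (\<lambda>y. f y + L *\<^sub>R y)"
      by (intro lipschitz_on_add L lipschitz_on_cmult lipschitz_on_id)
    with lip_const_shift_le_of_WIC[OF L diff that] diff show ?thesis by auto
  qed
  moreover have "WIC p f" if "?decomposition \<gamma> \<phi>" for \<gamma> \<phi>
  proof -
    from that obtain K where "K-lipschitz_on UNIV \<phi>" by blast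
    moreover have "\<phi> = (\<lambda>y. f y + \<gamma> *\<^sub>R y)" using that by auto
    ultimately show ?thesis
      using WIC_of_lip_const_shift_le[OF L diff] that by blast
  qed
  ultimately show ?thesis by blast
qed

end
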